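(* Let $n\ge1$, $\kappa>0$, and on $\mathbb{C}^{n+1}\setminus\{0\}$ with coordinates $z_1,\dots,z_{n+1}$ let $s=\sum|z_i|^2$, $F(s)=(1+\kappa/s^{n+1})^{1/(n+1)}$, and $g_{\mu\bar\nu}=F\delta_{\mu\nu}+F'\bar z_\mu z_\nu$. Define the $(0,1)$-form $\beta=\frac{\sum_i z_i\,d\bar z_i}{s^{n+1}F^n}$ and $\tilde\omega=2i\,d\beta$. Then $\bar\partial\beta=0$ and $\sum_{\mu,\nu}g^{\mu\bar\nu}\partial_{z_\mu}\beta_{\bar\nu}=0$, so $\beta$ lies in the kernel of the untwisted Dirac operator $\bar\partial-\bar\partial^*$ of $g$; the closed $2$-form $\tilde\omega$ is square-integrable with respect to $g$, while $\beta$ is not square-integrable. Moreover, with $\omega=2i\,d\big(F\sum_iz_i\,d\bar z_i\big)$ (the Kähler form of $g$) and $\xi=\frac{i}{2}\sum_\nu(z_\nu\partial_{z_\nu}-\bar z_\nu\partial_{\bar z_\nu})$, one has $\omega-\kappa\tilde\omega=2\,d(\xi^\flat)$, where $\xi^\flat$ is the $g$-metric dual of $\xi$.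
   Context: $g^{\mu\bar\nu}$ is the inverse matrix of $g_{\mu\bar\nu}$; $\bar\partial^*$ is the formal $L^2$-adjoint of $\bar\partial$ with respect to $g$, and for this Kähler metric $-\bar\partial^*\beta=\sum g^{\mu\bar\nu}\partial_{z_\mu}\beta_{\bar\nu}$ for $\beta=\sum\beta_{\bar\nu}d\bar z_\nu$. Square-integrability is with respect to the pointwise norm and Riemannian volume of $g$ on $\mathbb{C}^{n+1}\setminus\{0\}$. *)

theory Defs
  imports "HOL-Analysis.Analysis"
begin

text \<open>Coordinates on C^(n+1): vectors z :: complex^'n with CARD('n) = n+1.
  Differential forms are represented by their coefficient functions in the
  coordinate frame dz_mu, dzbar_nu.\<close>

datatype deg1 = D10 | D01   \<comment> \<open>dz-part / dzbar-part (or d/dz / d/dzbar for vectors)\<close>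
datatype deg2 = B20 | B11 | B02

type_synonym 'n form1 = "deg1 \<Rightarrow> 'n \<Rightarrow> complex^'n \<Rightarrow> complex"
type_synonym 'n vfield = "deg1 \<Rightarrow> 'n \<Rightarrow> complex^'n \<Rightarrow> complex"
text \<open>A 2-form T stands for
  (1/2) sum T B20 mu nu dz_mu/\dz_nu + sum T B11 mu nu dz_mu/\dzbar_nu
  + (1/2) sum T B02 mu nu dzbar_mu/\dzbar_nu  (B20, B02 antisymmetric).\<close>
type_synonym 'n form2 = "deg2 \<Rightarrow> 'n \<Rightarrow> 'n \<Rightarrow> complex^'n \<Rightarrow> complex"

definition sq :: "complex^'n::finite \<Rightarrow> real" where
  "sq z = (\<Sum>i\<in>UNIV. (cmod (z$i))^2)"

definition Fpot :: "real \<Rightarrow> nat \<Rightarrow> real \<Rightarrow> real" where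
  "Fpot \<kappa> N s = (1 + \<kappa> / s^N) powr (1 / real N)"

definition metric :: "real \<Rightarrow> complex^'n::finite \<Rightarrow> complex^'n^'n" where
  "metric \<kappa> z = (\<chi> \<mu>. \<chi> \<nu>.
      of_real (Fpot \<kappa> CARD('n) (sq z)) * (if \<mu> = \<nu> then 1 else 0)
    + of_real (deriv (Fpot \<kappa> CARD('n)) (sq z)) * cnj (z$\<mu>) * z$\<nu>)"

text \<open>g^{mu nubar}: the inverse matrix, (g^{-1}) entry at (nubar, mu).\<close>
definition invmetric :: "real \<Rightarrow> complex^'n::finite \<Rightarrow> 'n \<Rightarrow> 'n \<Rightarrow> complex" where
  "invmetric \<kappa> z \<mu> \<nu> = matrix_inv (metric \<kappa> z) $ \<nu> $ \<mu>"

definition dRe :: "'n::finite \<Rightarrow> (complex^'n \<Rightarrow> complex) \<Rightarrow> complex^'n \<Rightarrow> complex" where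
  "dRe \<mu> f z = vector_derivative (\<lambda>t::real. f (z + t *\<^sub>R axis \<mu> 1)) (at 0)"

definition dIm :: "'n::finite \<Rightarrow> (complex^'n \<Rightarrow> complex) \<Rightarrow> complex^'n \<Rightarrow> complex" where
  "dIm \<mu> f z = vector_derivative (\<lambda>t::real. f (z + t *\<^sub>R axis \<mu> \<i>)) (at 0)"

definition dz :: "'n::finite \<Rightarrow> (complex^'n \<Rightarrow> complex) \<Rightarrow> complex^'n \<Rightarrow> complex" where
  "dz \<mu> f z = (dRe \<mu> f z - \<i> * dIm \<mu> f z) / 2"

definition dzb :: "'n::finite \<Rightarrow> (complex^'n \<Rightarrow> complex) \<Rightarrow> complex^'n \<Rightarrow> complex" where
  "dzb \<mu> f z = (dRe \<mu> f z + \<i> * dIm \<mu> f z) / 2"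

definition dbar01 :: "('n::finite \<Rightarrow> complex^'n \<Rightarrow> complex) \<Rightarrow> 'n \<Rightarrow> 'n \<Rightarrow> complex^'n \<Rightarrow> complex" where
  "dbar01 b \<mu> \<nu> z = dzb \<mu> (b \<nu>) z - dzb \<nu> (b \<mu>) z"

definition d1 :: "'n::finite form1 \<Rightarrow> 'n form2" where
  "d1 a = (\<lambda>k \<mu> \<nu> z. case k of
      B20 \<Rightarrow> dz \<mu> (a D10 \<nu>) z - dz \<nu> (a D10 \<mu>) z
    | B11 \<Rightarrow> dz \<mu> (a D01 \<nu>) z - dzb \<nu> (a D10 \<mu>) z
    | B02 \<Rightarrow> dbar01 (a D01) \<mu> \<nu> z)"

text \<open>Metric dual of a complex vector field X = sum X^mu d/dz_mu + X^mubar d/dzbar_mu,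
  using g(d/dz_mu, d/dzbar_nu) = g_{mu nubar}.\<close>
definition flat :: "real \<Rightarrow> 'n::finite vfield \<Rightarrow> 'n form1" where
  "flat \<kappa> X = (\<lambda>k i z. case k of
      D10 \<Rightarrow> (\<Sum>\<nu>\<in>UNIV. metric \<kappa> z $ i $ \<nu> * X D01 \<nu> z)
    | D01 \<Rightarrow> (\<Sum>\<mu>\<in>UNIV. metric \<kappa> z $ \<mu> $ i * X D10 \<mu> z))"

definition xi :: "'n::finite vfield" where
  "xi = (\<lambda>k \<nu> z. case k of D10 \<Rightarrow> (\<i>/2) * z$\<nu> | D01 \<Rightarrow> - (\<i>/2) * cnj (z$\<nu>))"

definition beta :: "real \<Rightarrow> 'n::finite \<Rightarrow> complex^'n \<Rightarrow> complex" where
  "beta \<kappa> \<nu> z = z$\<nu> / of_real (sq z ^ CARD('n) * Fpot \<kappa> CARD('n) (sq z) ^ (CARD('n) - 1))"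

definition omegat :: "real \<Rightarrow> 'n::finite form2" where
  "omegat \<kappa> = (\<lambda>k \<mu> \<nu> z. 2 * \<i> * d1 (\<lambda>j i w. case j of D10 \<Rightarrow> 0 | D01 \<Rightarrow> beta \<kappa> i w) k \<mu> \<nu> z)"

definition omega :: "real \<Rightarrow> 'n::finite form2" where
  "omega \<kappa> = (\<lambda>k \<mu> \<nu> z. 2 * \<i> * d1 (\<lambda>j i w. case j of D10 \<Rightarrow> 0
        | D01 \<Rightarrow> of_real (Fpot \<kappa> CARD('n) (sq w)) * w$i) k \<mu> \<nu> z)"

text \<open>Pointwise squared g-norms (up to positive constant factors).\<close>
definition norm01 :: "real \<Rightarrow> ('n::finite \<Rightarrow> complex^'n \<Rightarrow> complex) \<Rightarrow> complex^'n \<Rightarrow> real" where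
  "norm01 \<kappa> b z = Re (\<Sum>\<mu>\<in>UNIV. \<Sum>\<nu>\<in>UNIV. invmetric \<kappa> z \<mu> \<nu> * cnj (b \<mu> z) * b \<nu> z)"

definition norm2f :: "real \<Rightarrow> 'n::finite form2 \<Rightarrow> complex^'n \<Rightarrow> real" where
  "norm2f \<kappa> T z = Re (\<Sum>\<mu>\<in>UNIV. \<Sum>\<nu>\<in>UNIV. \<Sum>\<alpha>\<in>UNIV. \<Sum>\<rho>\<in>UNIV.
       (1/2) * invmetric \<kappa> z \<mu> \<alpha> * invmetric \<kappa> z \<nu> \<rho> * T B20 \<mu> \<nu> z * cnj (T B20 \<alpha> \<rho> z)
     + invmetric \<kappa> z \<mu> \<alpha> * invmetric \<kappa> z \<rho> \<nu> * T B11 \<mu> \<nu> z * cnj (T B11 \<alpha> \<rho> z)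
     + (1/2) * invmetric \<kappa> z \<alpha> \<mu> * invmetric \<kappa> z \<rho> \<nu> * T B02 \<mu> \<nu> z * cnj (T B02 \<alpha> \<rho> z))"

text \<open>Riemannian volume density of g relative to Lebesgue measure (up to a constant).\<close>
definition vol :: "real \<Rightarrow> complex^'n::finite \<Rightarrow> real" where
  "vol \<kappa> z = Re (det (metric \<kappa> z))"

definition sq_integrable :: "real \<Rightarrow> (complex^'n::finite \<Rightarrow> real) \<Rightarrow> bool" where
  "sq_integrable \<kappa> f = set_integrable lborel (- {0}) (\<lambda>z. f z * vol \<kappa> z)"

end

theory Submission
  imports Defs "HOL-Probability.Sinc_Integral"
begin

text \<open>Everything is \<open>U(N)\<close>-invariant (\<open>N = n + 1\<close>), so all objects are built from
  \<open>s = |z|\<^sup>2\<close>, \<open>z\<close> and \<open>conj z\<close>. The metric, its inverse and the Wirtinger derivatives of the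
  radial forms are matrices \<open>p I + q (conj z) z\<^sup>T\<close>; these form a commutative algebra in which
  products and traces reduce to identities between functions of \<open>s\<close>. This turns \<open>dbar \<beta> = 0\<close>,
  the vanishing of \<open>tr (g\<^sup>-\<^sup>1 \<partial>\<beta>)\<close>, \<open>det g = F\<^sup>n (s F)' = 1\<close> and the pointwise norms
  \<open>|\<beta>|\<^sup>2 = F s / ((s\<^sup>N + \<kappa>) s\<^sup>N)\<close> and \<open>|\<omega>~|\<^sup>2 = 4 N (N - 1) / (s\<^sup>N + \<kappa>)\<^sup>2\<close> into
  computations in one variable. The second norm is bounded and decays like \<open>|z|\<^sup>-\<^sup>4\<^sup>N\<close> in real
  dimension \<open>2N\<close>, hence is integrable; the first is bounded below by a multiple of \<open>|z|\<^sup>-\<^sup>2\<^sup>N\<close>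
  near \<open>0\<close>, which is not. Finally \<open>\<xi>\<^sup>\<flat> = (i/2) (s F)' (z dzbar - conj z dz)\<close> and
  \<open>(s F)' = F - \<kappa> s\<^sup>-\<^sup>N F\<^sup>-\<^sup>n\<close>, which gives \<open>\<omega> - \<kappa> \<omega>~ = 2 d \<xi>\<^sup>\<flat>\<close>.\<close>

section \<open>The potential and the coefficient of \<open>\<beta>\<close>\<close>

lemma Fpot_pos:
  assumes "s > 0" "\<kappa> > 0"
  shows "Fpot \<kappa> N s > 0"
proof -
  have "1 + \<kappa>/s^N > 0" using assms by (simp add: add_pos_pos)
  then show ?thesis unfolding Fpot_def by simp
qed

lemma Fpot_power:
  assumes "s > 0" "\<kappa> > 0" "N > 0"
  shows "Fpot \<kappa> N s ^ N = (s^N + \<kappa>) / s^N"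
proof -
  have pos: "1 + \<kappa>/s^N > 0" using assms by (simp add: add_pos_pos)
  have "Fpot \<kappa> N s ^ N = ((1 + \<kappa>/s^N) powr (1/real N)) powr (real N)"
    unfolding Fpot_def using pos by (simp add: powr_realpow)
  also have "\<dots> = 1 + \<kappa>/s^N" using assms pos by (simp add: powr_powr)
  finally show ?thesis using assms by (simp add: field_simps)
qed

lemma Fpot_has_real_derivative:
  assumes "s > 0" "\<kappa> > 0" "N > 0"
  shows "(Fpot \<kappa> N has_real_derivative - \<kappa> * Fpot \<kappa> N s / (s * (s^N + \<kappa>))) (at s)"
proof -
  have pos: "1 + \<kappa>/s^N > 0" using assms by (simp add: add_pos_pos)
  have inner: "((\<lambda>x. 1 + \<kappa>/x^N) has_real_derivative - \<kappa> * (real N * s^(N-1)) / (s^N)^2) (at s)"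
    using assms by (auto intro!: derivative_eq_intros simp: power2_eq_square)
  have "(Fpot \<kappa> N has_real_derivative
      (1/real N) * (1 + \<kappa>/s^N) powr (1/real N - of_nat 1) * (- \<kappa> * (real N * s^(N-1)) / (s^N)^2)) (at s)"
    unfolding Fpot_def[abs_def] by (rule DERIV_fun_powr[OF inner pos])
  moreover have "(1/real N) * (1 + \<kappa>/s^N) powr (1/real N - of_nat 1) * (- \<kappa> * (real N * s^(N-1)) / (s^N)^2)
      = - \<kappa> * Fpot \<kappa> N s / (s * (s^N + \<kappa>))"
  proof -
    have e: "(1 + \<kappa>/s^N) powr (1/real N - of_nat 1) = Fpot \<kappa> N s / (1 + \<kappa>/s^N)"
      unfolding Fpot_def using pos by (simp add: powr_diff)
    have sN: "s^N = s * s^(N-1)" using assms by (cases N) auto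
    have "(1/real N) * (Fpot \<kappa> N s / (1 + \<kappa>/s^N)) * (- \<kappa> * (real N * s^(N-1)) / (s^N)^2)
       = - \<kappa> * Fpot \<kappa> N s * s^(N-1) / ((1 + \<kappa>/s^N) * (s^N)^2)"
      using assms by (simp add: divide_simps)
    also have "(1 + \<kappa>/s^N) * (s^N)^2 = s^(N-1) * (s * (s^N + \<kappa>))"
      using assms sN by (simp add: field_simps power2_eq_square)
    finally show ?thesis unfolding e using assms by simp
  qed
  ultimately show ?thesis by simp
qed

lemma deriv_Fpot:
  assumes "s > 0" "\<kappa> > 0" "N > 0"
  shows "deriv (Fpot \<kappa> N) s = - \<kappa> * Fpot \<kappa> N s / (s * (s^N + \<kappa>))"
  using DERIV_imp_deriv[OF Fpot_has_real_derivative[OF assms]] .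

definition beta_coeff :: "real \<Rightarrow> nat \<Rightarrow> real \<Rightarrow> real" where
  "beta_coeff \<kappa> N s = 1 / (s^N * Fpot \<kappa> N s ^ (N - 1))"

lemma beta_coeff_eq:
  assumes "s > 0" "\<kappa> > 0" "N > 0"
  shows "beta_coeff \<kappa> N s = Fpot \<kappa> N s / (s^N + \<kappa>)"
proof -
  have F: "Fpot \<kappa> N s > 0" using Fpot_pos assms by auto
  have "Fpot \<kappa> N s ^ (N - 1) * Fpot \<kappa> N s = Fpot \<kappa> N s ^ N"
    using assms by (cases N) auto
  then have "s^N * Fpot \<kappa> N s ^ (N - 1) * Fpot \<kappa> N s = s^N + \<kappa>"
    using Fpot_power[OF assms] assms by (simp add: mult.assoc)
  moreover have "s^N + \<kappa> > 0" using assms by (simp add: add_pos_pos)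
  ultimately show ?thesis unfolding beta_coeff_def using F assms
    by (simp add: field_simps)
qed

lemma beta_coeff_has_real_derivative:
  assumes "s > 0" "\<kappa> > 0" "N > 0"
  shows "(beta_coeff \<kappa> N has_real_derivative
     - Fpot \<kappa> N s * (real N * s^N + \<kappa>) / (s * (s^N + \<kappa>)^2)) (at s)"
proof -
  have P: "s^N + \<kappa> > 0" using assms by (simp add: add_pos_pos)
  have sN: "s^N = s * s^(N-1)" using assms by (cases N) auto
  have "((\<lambda>x. Fpot \<kappa> N x / (x^N + \<kappa>)) has_real_derivative
     ((- \<kappa> * Fpot \<kappa> N s / (s * (s^N + \<kappa>))) * (s^N + \<kappa>) - Fpot \<kappa> N s * (real N * s^(N-1)))
        / (s^N + \<kappa>)^2) (at s)"
    using Fpot_has_real_derivative[OF assms] P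
    by (auto intro!: derivative_eq_intros simp: power2_eq_square)
  moreover have "((- \<kappa> * Fpot \<kappa> N s / (s * (s^N + \<kappa>))) * (s^N + \<kappa>) - Fpot \<kappa> N s * (real N * s^(N-1)))
        / (s^N + \<kappa>)^2 = - Fpot \<kappa> N s * (real N * s^N + \<kappa>) / (s * (s^N + \<kappa>)^2)"
    using assms P by (simp add: sN divide_simps) (simp add: algebra_simps)
  ultimately have "((\<lambda>x. Fpot \<kappa> N x / (x^N + \<kappa>)) has_real_derivative
      - Fpot \<kappa> N s * (real N * s^N + \<kappa>) / (s * (s^N + \<kappa>)^2)) (at s)"
    by simp
  then show ?thesis
  proof (rule has_field_derivative_transform_within_open[where S="{0<..}"])
    show "Fpot \<kappa> N x / (x^N + \<kappa>) = beta_coeff \<kappa> N x" if "x \<in> {0<..}" for x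
      using beta_coeff_eq[of x \<kappa> N] that assms by simp
  qed (use assms in auto)
qed

text \<open>\<open>Fpot_radial\<close> is \<open>(s F)'\<close>, the eigenvalue of the metric in the radial direction.\<close>
definition Fpot_radial :: "real \<Rightarrow> nat \<Rightarrow> real \<Rightarrow> real" where
  "Fpot_radial \<kappa> N s = Fpot \<kappa> N s + deriv (Fpot \<kappa> N) s * s"

lemma Fpot_radial_eq:
  assumes "s > 0" "\<kappa> > 0" "N > 0"
  shows "Fpot_radial \<kappa> N s = Fpot \<kappa> N s - \<kappa> * beta_coeff \<kappa> N s"
    and "Fpot_radial \<kappa> N s = Fpot \<kappa> N s * s^N / (s^N + \<kappa>)"
proof -
  have P: "s^N + \<kappa> > 0" using assms by (simp add: add_pos_pos)
  show "Fpot_radial \<kappa> N s = Fpot \<kappa> N s - \<kappa> * beta_coeff \<kappa> N s"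
    unfolding Fpot_radial_def deriv_Fpot[OF assms] beta_coeff_eq[OF assms] using assms P
    by (simp add: divide_simps)
  then show "Fpot_radial \<kappa> N s = Fpot \<kappa> N s * s^N / (s^N + \<kappa>)"
    unfolding beta_coeff_eq[OF assms] using assms P by (simp add: field_simps)
qed

lemma Fpot_radial_has_real_derivative:
  assumes "s > 0" "\<kappa> > 0" "N > 0"
    and "(Fpot \<kappa> N has_real_derivative F') (at s)" "(beta_coeff \<kappa> N has_real_derivative h') (at s)"
  shows "(Fpot_radial \<kappa> N has_real_derivative F' - \<kappa> * h') (at s)"
proof -
  have "((\<lambda>x. Fpot \<kappa> N x - \<kappa> * beta_coeff \<kappa> N x) has_real_derivative F' - \<kappa> * h') (at s)"
    by (rule DERIV_diff[OF assms(4) DERIV_cmult[OF assms(5)]])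
  then show ?thesis
  proof (rule has_field_derivative_transform_within_open[where S="{0<..}"])
    show "Fpot \<kappa> N x - \<kappa> * beta_coeff \<kappa> N x = Fpot_radial \<kappa> N x" if "x \<in> {0<..}" for x
      using Fpot_radial_eq(1)[of x \<kappa> N] that assms by simp
  qed (use assms in auto)
qed

section \<open>Radial matrices\<close>

lemma det_diagonal_except_column:
  fixes A :: "'a::comm_ring_1^'n::finite^'n"
  assumes off: "\<And>i j. i \<noteq> j \<Longrightarrow> j \<noteq> k \<Longrightarrow> A$i$j = 0"
  shows "det A = (\<Prod>i\<in>UNIV. A$i$i)"
proof -
  have "(\<Prod>i\<in>UNIV. A$i$p i) = 0" if p: "p permutes UNIV" "p \<noteq> id" for p
  proof -
    obtain i where i: "p i \<noteq> i" using p(2) by fastforce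
    have "\<exists>j. p j \<noteq> j \<and> p j \<noteq> k"
    proof (cases "p i = k")
      case True
      then have "p k \<noteq> k" using i permutes_inj[OF p(1)] by (metis injD)
      then show ?thesis by blast
    qed (use i in blast)
    then obtain j where "A$j$p j = 0" using off by metis
    then show ?thesis by (intro prod_zero) auto
  qed
  then have "\<forall>p \<in> {p. p permutes UNIV} - {id}. of_int (sign p) * (\<Prod>i\<in>UNIV. A$i$p i) = 0"
    by simp
  from sum.mono_neutral_cong_left[OF finite_permutations _ this] show ?thesis
    unfolding det_def by (simp add: sign_id permutes_id)
qed

text \<open>The matrix \<open>c I + u v\<^sup>T\<close> after subtracting \<open>u i / u k\<close> times row \<open>k\<close> from every other row \<open>i\<close>.\<close>
lemma det_rank_one_update_pivot:
  fixes u v :: "'n::finite \<Rightarrow> 'a::field"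
  assumes c: "c \<noteq> 0" and uk: "u k \<noteq> 0"
  defines "M1 \<equiv> (\<chi> i j. if i = k then c * (if k = j then 1 else 0) + u k * v j
      else c * (if i = j then 1 else 0) - u i / u k * c * (if k = j then 1 else 0))"
  shows "det M1 = c ^ (CARD('n) - 1) * (c + (\<Sum>i\<in>UNIV. u i * v i))"
proof -
  define D where "D = c + (\<Sum>i\<in>UNIV. u i * v i)"
  \<comment> \<open>adding a combination of the other rows clears row \<open>k\<close> except for its diagonal entry\<close>
  define x where "x = (\<Sum>l\<in>UNIV-{k}. (- (u k * v l) / c) *s row l M1)"
  define M2 where "M2 = (\<chi> i j. if i = k then D * (if k = j then 1 else 0) else M1$i$j)"
  have "x \<in> vec.span {row j M1 |j. j \<noteq> k}"
    unfolding x_def by (intro vec.span_sum vec.span_scale vec.span_base) auto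
  then have "det (\<chi> m. if m = k then row k M1 + x else row m M1) = det M1"
    by (rule det_row_span)
  moreover have "(\<chi> m. if m = k then row k M1 + x else row m M1) = M2"
  proof -
    have "x $ j = (\<Sum>l\<in>UNIV-{k}. (- (u k * v l) / c) * M1 $ l $ j)" for j
      by (simp add: x_def row_def)
    also have "\<dots> j = (\<Sum>l\<in>UNIV-{k}. (- (u k * v l)) * (if l = j then 1 else 0)
          + v l * u l * (if k = j then 1 else 0))" for j
      using c uk by (intro sum.cong refl) (simp add: M1_def right_diff_distrib)
    also have "\<dots> j = (if j = k then (\<Sum>l\<in>UNIV-{k}. u l * v l) else - (u k * v j))" for j
    proof (cases "j = k")
      case False
      have "(\<Sum>l\<in>UNIV-{k}. (- (u k * v l)) * (if l = j then 1 else 0) + v l * u l * (if k = j then 1 else 0))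
          = (\<Sum>l\<in>UNIV-{k}. if l = j then - (u k * v j) else 0)"
        using False by (intro sum.cong) auto
      then show ?thesis using False by (simp add: sum.delta)
    qed (simp add: mult.commute)
    finally have "x $ j = (if j = k then (\<Sum>l\<in>UNIV. u l * v l) - u k * v k else - (u k * v j))" for j
      by (simp add: sum_diff1)
    then show ?thesis
      by (auto simp: vec_eq_iff row_def M1_def M2_def D_def)
  qed
  moreover have "det M2 = D * c ^ (CARD('n) - 1)"
  proof -
    have "det M2 = (\<Prod>i\<in>UNIV. M2$i$i)"
      by (rule det_diagonal_except_column[where k=k]) (auto simp: M2_def M1_def)
    also have "\<dots> = M2$k$k * (\<Prod>i\<in>UNIV-{k}. M2$i$i)"
      by (rule prod.remove) auto
    also have "(\<Prod>i\<in>UNIV-{k}. M2$i$i) = (\<Prod>i\<in>UNIV-{k}. c)"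
      by (rule prod.cong) (auto simp: M2_def M1_def)
    finally show ?thesis by (simp add: M2_def card_Diff_singleton)
  qed
  ultimately show ?thesis by (simp add: D_def mult.commute)
qed

lemma det_rank_one_update:
  fixes u v :: "'n::finite \<Rightarrow> 'a::field"
  assumes c: "c \<noteq> 0"
  shows "det (\<chi> i j. c * (if i = j then 1 else 0) + u i * v j)
       = c ^ (CARD('n) - 1) * (c + (\<Sum>i\<in>UNIV. u i * v i))"
proof (cases "\<forall>i. u i = 0")
  case True
  then have "det (\<chi> i j. c * (if i = j then 1 else 0) + u i * v j) = c ^ CARD('n)"
    by (subst det_diagonal) auto
  also have "\<dots> = c ^ (CARD('n) - 1) * c"
    by (metis Suc_diff_1 power_Suc2 zero_less_card_finite)
  finally show ?thesis using True by simp
next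
  case False
  then obtain k where uk: "u k \<noteq> 0" by auto
  define M where "M = (\<chi> i j. c * (if i = j then 1 else 0) + u i * v j)"
  define E where "E = (\<chi> i j. (if i = j then 1 else 0) - (if j = k \<and> i \<noteq> k then u i / u k else 0))"
  have row_op: "(E ** M)$i$j = M$i$j - (if i \<noteq> k then u i / u k * M$k$j else 0)" for i j
    by (simp add: matrix_matrix_mult_def E_def left_diff_distrib sum_subtractf if_distrib[of "\<lambda>x. x * _"]
        sum.delta sum.delta' cong: if_cong)
  have "E ** M = (\<chi> i j. if i = k then c * (if k = j then 1 else 0) + u k * v j
      else c * (if i = j then 1 else 0) - u i / u k * c * (if k = j then 1 else 0))"
    unfolding vec_eq_iff row_op using uk by (simp add: M_def field_simps)
  moreover have "det E = 1"
    by (subst det_diagonal_except_column[where k=k]) (auto simp: E_def)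
  ultimately have "det M = det (\<chi> i j. if i = k then c * (if k = j then 1 else 0) + u k * v j
      else c * (if i = j then 1 else 0) - u i / u k * c * (if k = j then 1 else 0))"
    by (metis det_mul mult_1)
  then show ?thesis
    unfolding M_def det_rank_one_update_pivot[where u=u and k=k, OF c uk] .
qed

lemma matrix_inv_eqI:
  fixes A B :: "'a::comm_ring_1^'n::finite^'n"
  assumes "A ** B = mat 1" "B ** A = mat 1"
  shows "matrix_inv A = B"
proof -
  have inv: "A ** matrix_inv A = mat 1 \<and> matrix_inv A ** A = mat 1"
    unfolding matrix_inv_def by (rule someI[of _ B]) (use assms in simp)
  have "matrix_inv A = matrix_inv A ** (A ** B)"
    using assms by (simp add: matrix_mul_rid)
  also have "\<dots> = B"
    using inv by (simp add: matrix_mul_assoc matrix_mul_lid)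
  finally show ?thesis .
qed

lemma trace_matrix_mult_eq_sum:
  fixes A B :: "'a::comm_semiring_1^'n::finite^'n"
  shows "trace (A ** B) = (\<Sum>\<mu>\<in>UNIV. \<Sum>\<nu>\<in>UNIV. A$\<nu>$\<mu> * B$\<mu>$\<nu>)"
  unfolding trace_def matrix_matrix_mult_def by simp (rule sum.swap)

lemma trace_matrix_mult4_eq_sum:
  fixes A B C D :: "'a::comm_semiring_1^'n::finite^'n"
  shows "trace ((A ** B) ** (C ** D))
    = (\<Sum>\<mu>\<in>UNIV. \<Sum>\<nu>\<in>UNIV. \<Sum>\<alpha>\<in>UNIV. \<Sum>\<rho>\<in>UNIV. A$\<alpha>$\<mu> * C$\<nu>$\<rho> * B$\<mu>$\<nu> * D$\<rho>$\<alpha>)"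
proof -
  let ?X = "\<lambda>\<mu> \<nu> \<alpha>. \<Sum>\<rho>\<in>UNIV. A$\<alpha>$\<mu> * C$\<nu>$\<rho> * B$\<mu>$\<nu> * D$\<rho>$\<alpha>"
  have "trace ((A ** B) ** (C ** D)) = (\<Sum>\<alpha>\<in>UNIV. \<Sum>\<nu>\<in>UNIV. \<Sum>\<mu>\<in>UNIV. ?X \<mu> \<nu> \<alpha>)"
    by (simp add: trace_def matrix_matrix_mult_def sum_product mult_ac)
  also have "\<dots> = (\<Sum>\<nu>\<in>UNIV. \<Sum>\<alpha>\<in>UNIV. \<Sum>\<mu>\<in>UNIV. ?X \<mu> \<nu> \<alpha>)"
    by (rule sum.swap)
  also have "\<dots> = (\<Sum>\<nu>\<in>UNIV. \<Sum>\<mu>\<in>UNIV. \<Sum>\<alpha>\<in>UNIV. ?X \<mu> \<nu> \<alpha>)"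
    by (rule sum.cong[OF refl]) (rule sum.swap)
  also have "\<dots> = (\<Sum>\<mu>\<in>UNIV. \<Sum>\<nu>\<in>UNIV. \<Sum>\<alpha>\<in>UNIV. ?X \<mu> \<nu> \<alpha>)"
    by (rule sum.swap)
  finally show ?thesis .
qed

lemma sq_norm: "sq z = (norm z)^2"
  unfolding sq_def norm_vec_def L2_set_def by (simp add: sum_nonneg)

lemma sq_nonneg: "sq z \<ge> 0"
  by (simp add: sq_norm)

lemma sq_pos: "z \<noteq> 0 \<Longrightarrow> sq z > 0"
  by (simp add: sq_norm)

lemma sum_cnj_mult_eq_sq: "(\<Sum>i\<in>UNIV. cnj (z$i) * z$i) = complex_of_real (sq z)"
proof -
  have "cnj (z$i) * z$i = complex_of_real ((cmod (z$i))^2)" for i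
    by (simp add: mult.commute[of "cnj _"] complex_mult_cnj cmod_power2)
  then show ?thesis unfolding sq_def of_real_sum by simp
qed

definition radial_matrix :: "complex^'n::finite \<Rightarrow> real \<Rightarrow> real \<Rightarrow> complex^'n^'n" where
  "radial_matrix z p q = (\<chi> \<mu> \<nu>. of_real p * (if \<mu> = \<nu> then 1 else 0) + of_real q * cnj (z$\<mu>) * z$\<nu>)"

lemma radial_matrix_mult:
  "radial_matrix z p q ** radial_matrix z p' q'
    = radial_matrix z (p * p') (p * q' + q * p' + q * q' * sq z)"
proof -
  have "(\<Sum>k\<in>UNIV. (of_real p * (if i = k then 1 else 0) + of_real q * cnj (z$i) * z$k)
        * (of_real p' * (if k = j then 1 else 0) + of_real q' * cnj (z$k) * z$j))
    = of_real (p * p') * (if i = j then 1 else 0)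
      + of_real (p * q' + q * p' + q * q' * sq z) * cnj (z$i) * z$j" for i j
  proof -
    have "(\<Sum>k\<in>UNIV. (of_real p * (if i = k then 1 else 0) + of_real q * cnj (z$i) * z$k)
        * (of_real p' * (if k = j then 1 else 0) + of_real q' * cnj (z$k) * z$j))
      = (\<Sum>k\<in>UNIV. (if k = i then of_real p * (of_real p' * (if i = j then 1 else 0) + of_real q' * cnj (z$i) * z$j) else 0)
          + (if k = j then of_real q * of_real p' * cnj (z$i) * z$j else 0)
          + (of_real q * of_real q' * cnj (z$i) * z$j) * (cnj (z$k) * z$k))"
      by (intro sum.cong) (auto simp: algebra_simps)
    also have "\<dots> = of_real (p * p') * (if i = j then 1 else 0)
      + of_real (p * q' + q * p' + q * q' * sq z) * cnj (z$i) * z$j"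
      unfolding sum.distrib sum_distrib_left[symmetric] sum_cnj_mult_eq_sq by (simp add: algebra_simps)
    finally show ?thesis .
  qed
  then show ?thesis
    by (simp add: vec_eq_iff matrix_matrix_mult_def radial_matrix_def)
qed

lemma radial_matrix_1_0: "radial_matrix z 1 0 = mat 1"
  by (simp add: vec_eq_iff radial_matrix_def mat_def)

lemma trace_radial_matrix: "trace (radial_matrix z p q) = of_real (real CARD('n) * p + q * sq z)"
  for z :: "complex^'n::finite"
  by (simp add: trace_def radial_matrix_def sum.distrib mult.assoc sum_distrib_left[symmetric]
      sum_cnj_mult_eq_sq)

lemma cnj_radial_matrix: "cnj (radial_matrix z p q $ \<mu> $ \<nu>) = radial_matrix z p q $ \<nu> $ \<mu>"
  by (simp add: radial_matrix_def)

lemma radial_matrix_mult_cnj: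
  "(\<Sum>\<nu>\<in>UNIV. radial_matrix z p q $ \<mu> $ \<nu> * cnj (z$\<nu>)) = of_real (p + q * sq z) * cnj (z$\<mu>)"
  and radial_matrix_transpose_mult:
  "(\<Sum>\<mu>\<in>UNIV. radial_matrix z p q $ \<mu> $ \<nu> * z$\<mu>) = of_real (p + q * sq z) * z$\<nu>"
proof -
  have "(\<Sum>\<nu>\<in>UNIV. radial_matrix z p q $ \<mu> $ \<nu> * cnj (z$\<nu>))
      = (\<Sum>\<nu>\<in>UNIV. (if \<nu> = \<mu> then of_real p * cnj (z$\<mu>) else 0) + of_real q * cnj (z$\<mu>) * (cnj (z$\<nu>) * z$\<nu>))"
    by (intro sum.cong) (auto simp: radial_matrix_def algebra_simps)
  then show "(\<Sum>\<nu>\<in>UNIV. radial_matrix z p q $ \<mu> $ \<nu> * cnj (z$\<nu>)) = of_real (p + q * sq z) * cnj (z$\<mu>)"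
    unfolding sum.distrib sum_distrib_left[symmetric] sum_cnj_mult_eq_sq by (simp add: algebra_simps)
  have "(\<Sum>\<mu>\<in>UNIV. radial_matrix z p q $ \<mu> $ \<nu> * z$\<mu>)
      = (\<Sum>\<mu>\<in>UNIV. (if \<mu> = \<nu> then of_real p * z$\<nu> else 0) + of_real q * z$\<nu> * (cnj (z$\<mu>) * z$\<mu>))"
    by (intro sum.cong) (auto simp: radial_matrix_def algebra_simps)
  then show "(\<Sum>\<mu>\<in>UNIV. radial_matrix z p q $ \<mu> $ \<nu> * z$\<mu>) = of_real (p + q * sq z) * z$\<nu>"
    unfolding sum.distrib sum_distrib_left[symmetric] sum_cnj_mult_eq_sq by (simp add: algebra_simps)
qed

lemma det_radial_matrix:
  fixes z :: "complex^'n::finite"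
  assumes "p \<noteq> 0"
  shows "det (radial_matrix z p q) = of_real (p ^ (CARD('n) - 1) * (p + q * sq z))"
proof -
  have "det (radial_matrix z p q) = of_real p ^ (CARD('n) - 1)
      * (of_real p + (\<Sum>i\<in>UNIV. of_real q * cnj (z$i) * z$i))"
    unfolding radial_matrix_def using det_rank_one_update[of "of_real p" "\<lambda>i. of_real q * cnj (z$i)" "\<lambda>j. z$j"] assms
    by simp
  then show ?thesis by (simp add: mult.assoc sum_distrib_left[symmetric] sum_cnj_mult_eq_sq)
qed

lemma matrix_inv_radial_matrix:
  assumes "p \<noteq> 0" "p + q * sq z \<noteq> 0"
  shows "matrix_inv (radial_matrix z p q) = radial_matrix z (1/p) (- q / (p * (p + q * sq z)))"
proof -
  define q' where "q' = - q / (p * (p + q * sq z))"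
  have "q' * (p + q * sq z) = - q / p" using assms by (simp add: q'_def)
  then have "p * q' + q * (1/p) + q * q' * sq z = 0" "1/p * q + q' * p + q' * q * sq z = 0"
    using assms by (simp_all add: field_simps)
  then show ?thesis
    unfolding q'_def[symmetric] using assms
    by (intro matrix_inv_eqI) (simp_all add: radial_matrix_mult radial_matrix_1_0)
qed

section \<open>Wirtinger derivatives of radial forms\<close>

lemma sq_add_scaleR: "sq (z + t *\<^sub>R v) = sq z + 2 * t * (z \<bullet> v) + t^2 * sq v"
  unfolding sq_norm power2_norm_eq_inner
  by (simp add: inner_add_left inner_add_right inner_commute[of v z] algebra_simps power2_eq_square)

lemma has_vector_derivative_radial_line:
  fixes z v :: "complex^'n::finite" and L :: "complex^'n \<Rightarrow> complex"
  assumes "(\<phi> has_real_derivative \<phi>') (at (sq z))" "bounded_linear L"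
  shows "((\<lambda>t. of_real (\<phi> (sq (z + t *\<^sub>R v))) * L (z + t *\<^sub>R v)) has_vector_derivative
      of_real (\<phi> (sq z)) * L v + of_real (\<phi>' * (2 * (z \<bullet> v))) * L z) (at 0)"
proof -
  have "((\<lambda>t. sq (z + t *\<^sub>R v)) has_real_derivative 2 * (z \<bullet> v)) (at 0)"
    unfolding sq_add_scaleR by (auto intro!: derivative_eq_intros)
  then have "((\<lambda>t. \<phi> (sq (z + t *\<^sub>R v))) has_real_derivative \<phi>' * (2 * (z \<bullet> v))) (at 0)"
    using DERIV_chain2[where g="\<lambda>t. sq (z + t *\<^sub>R v)" and x=0] assms(1) by simp
  moreover have "((\<lambda>t. L (z + t *\<^sub>R v)) has_vector_derivative L v) (at 0)"
    by (rule bounded_linear.has_vector_derivative[OF assms(2), of "\<lambda>t. z + t *\<^sub>R v" v, simplified])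
       (auto intro!: derivative_eq_intros)
  ultimately have "((\<lambda>t. of_real (\<phi> (sq (z + t *\<^sub>R v))) * L (z + t *\<^sub>R v)) has_vector_derivative
      of_real (\<phi> (sq (z + 0 *\<^sub>R v))) * L v + of_real (\<phi>' * (2 * (z \<bullet> v))) * L (z + 0 *\<^sub>R v)) (at 0)"
    by (rule has_vector_derivative_mult[OF has_vector_derivative_of_real])
  then show ?thesis by simp
qed

lemma wirtinger_radial:
  fixes z :: "complex^'n::finite" and L :: "complex^'n \<Rightarrow> complex"
  assumes "(\<phi> has_real_derivative \<phi>') (at (sq z))" "bounded_linear L"
  shows "dz \<mu> (\<lambda>w. of_real (\<phi> (sq w)) * L w) z
      = of_real \<phi>' * cnj (z$\<mu>) * L z + of_real (\<phi> (sq z)) * (L (axis \<mu> 1) - \<i> * L (axis \<mu> \<i>)) / 2"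
    and "dzb \<mu> (\<lambda>w. of_real (\<phi> (sq w)) * L w) z
      = of_real \<phi>' * z$\<mu> * L z + of_real (\<phi> (sq z)) * (L (axis \<mu> 1) + \<i> * L (axis \<mu> \<i>)) / 2"
proof -
  note line = vector_derivative_at[OF has_vector_derivative_radial_line[OF assms]]
  have re: "dRe \<mu> (\<lambda>w. of_real (\<phi> (sq w)) * L w) z
      = of_real (\<phi> (sq z)) * L (axis \<mu> 1) + 2 * of_real \<phi>' * of_real (Re (z$\<mu>)) * L z"
    unfolding dRe_def line by (simp add: inner_axis)
  have im: "dIm \<mu> (\<lambda>w. of_real (\<phi> (sq w)) * L w) z
      = of_real (\<phi> (sq z)) * L (axis \<mu> \<i>) + 2 * of_real \<phi>' * of_real (Im (z$\<mu>)) * L z"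
    unfolding dIm_def line by (simp add: inner_axis)
  have cnj: "of_real (Re w) - \<i> * of_real (Im w) = cnj w" and id: "of_real (Re w) + \<i> * of_real (Im w) = w"
    for w by (simp_all add: complex_eq_iff)
  have "dRe \<mu> (\<lambda>w. of_real (\<phi> (sq w)) * L w) z - \<i> * dIm \<mu> (\<lambda>w. of_real (\<phi> (sq w)) * L w) z
      = of_real (\<phi> (sq z)) * (L (axis \<mu> 1) - \<i> * L (axis \<mu> \<i>))
        + 2 * of_real \<phi>' * (of_real (Re (z$\<mu>)) - \<i> * of_real (Im (z$\<mu>))) * L z"
    unfolding re im by (simp add: algebra_simps)
  then show "dz \<mu> (\<lambda>w. of_real (\<phi> (sq w)) * L w) z
      = of_real \<phi>' * cnj (z$\<mu>) * L z + of_real (\<phi> (sq z)) * (L (axis \<mu> 1) - \<i> * L (axis \<mu> \<i>)) / 2"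
    unfolding dz_def cnj by simp
  have "dRe \<mu> (\<lambda>w. of_real (\<phi> (sq w)) * L w) z + \<i> * dIm \<mu> (\<lambda>w. of_real (\<phi> (sq w)) * L w) z
      = of_real (\<phi> (sq z)) * (L (axis \<mu> 1) + \<i> * L (axis \<mu> \<i>))
        + 2 * of_real \<phi>' * (of_real (Re (z$\<mu>)) + \<i> * of_real (Im (z$\<mu>))) * L z"
    unfolding re im by (simp add: algebra_simps)
  then show "dzb \<mu> (\<lambda>w. of_real (\<phi> (sq w)) * L w) z
      = of_real \<phi>' * z$\<mu> * L z + of_real (\<phi> (sq z)) * (L (axis \<mu> 1) + \<i> * L (axis \<mu> \<i>)) / 2"
    unfolding dzb_def id by simp
qed

definition radial_form1 :: "complex \<Rightarrow> complex \<Rightarrow> (real \<Rightarrow> real) \<Rightarrow> 'n::finite form1" where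
  "radial_form1 a b \<phi> = (\<lambda>k \<nu> w. of_real (\<phi> (sq w)) * (case k of D10 \<Rightarrow> a * cnj (w$\<nu>) | D01 \<Rightarrow> b * w$\<nu>))"

lemma wirtinger_radial_form1:
  fixes z :: "complex^'n::finite"
  assumes "(\<phi> has_real_derivative \<phi>') (at (sq z))"
  shows "dz \<mu> (radial_form1 a b \<phi> D01 \<nu>) z = b * radial_matrix z (\<phi> (sq z)) \<phi>' $ \<mu> $ \<nu>"
    and "dzb \<mu> (radial_form1 a b \<phi> D01 \<nu>) z = b * of_real \<phi>' * z$\<mu> * z$\<nu>"
    and "dz \<mu> (radial_form1 a b \<phi> D10 \<nu>) z = a * of_real \<phi>' * cnj (z$\<mu>) * cnj (z$\<nu>)"
    and "dzb \<mu> (radial_form1 a b \<phi> D10 \<nu>) z = a * radial_matrix z (\<phi> (sq z)) \<phi>' $ \<nu> $ \<mu>"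
proof -
  have lin: "bounded_linear (\<lambda>w::complex^'n. b * w$\<nu>)" "bounded_linear (\<lambda>w::complex^'n. a * cnj (w$\<nu>))"
    by (rule bounded_linear_compose[OF bounded_linear_mult_right bounded_linear_vec_nth],
        rule bounded_linear_compose[OF bounded_linear_mult_right
          bounded_linear_compose[OF bounded_linear_cnj bounded_linear_vec_nth]])
  have D01: "radial_form1 a b \<phi> D01 \<nu> = (\<lambda>w. of_real (\<phi> (sq w)) * (b * w$\<nu>))"
    and D10: "radial_form1 a b \<phi> D10 \<nu> = (\<lambda>w. of_real (\<phi> (sq w)) * (a * cnj (w$\<nu>)))"
    by (simp_all add: radial_form1_def)
  show "dz \<mu> (radial_form1 a b \<phi> D01 \<nu>) z = b * radial_matrix z (\<phi> (sq z)) \<phi>' $ \<mu> $ \<nu>"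
    "dzb \<mu> (radial_form1 a b \<phi> D01 \<nu>) z = b * of_real \<phi>' * z$\<mu> * z$\<nu>"
    unfolding D01 wirtinger_radial[OF assms lin(1)]
    by (auto simp: radial_matrix_def axis_def algebra_simps)
  show "dz \<mu> (radial_form1 a b \<phi> D10 \<nu>) z = a * of_real \<phi>' * cnj (z$\<mu>) * cnj (z$\<nu>)"
    "dzb \<mu> (radial_form1 a b \<phi> D10 \<nu>) z = a * radial_matrix z (\<phi> (sq z)) \<phi>' $ \<nu> $ \<mu>"
    unfolding D10 wirtinger_radial[OF assms lin(2)]
    by (auto simp: radial_matrix_def axis_def algebra_simps)
qed

lemma d1_radial_form1:
  fixes z :: "complex^'n::finite"
  assumes "(\<phi> has_real_derivative \<phi>') (at (sq z))"
  shows "d1 (radial_form1 a b \<phi>) B20 \<mu> \<nu> z = 0"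
    and "d1 (radial_form1 a b \<phi>) B11 \<mu> \<nu> z = (b - a) * radial_matrix z (\<phi> (sq z)) \<phi>' $ \<mu> $ \<nu>"
    and "d1 (radial_form1 a b \<phi>) B02 \<mu> \<nu> z = 0"
  unfolding d1_def dbar01_def by (simp_all add: wirtinger_radial_form1[OF assms] algebra_simps)

section \<open>The metric and the forms \<open>\<beta>\<close>, \<open>\<omega>\<close>, \<open>\<xi>\<^sup>\<flat>\<close>\<close>

lemma metric_eq_radial_matrix:
  "metric \<kappa> z = radial_matrix z (Fpot \<kappa> CARD('n) (sq z)) (deriv (Fpot \<kappa> CARD('n)) (sq z))"
  for z :: "complex^'n::finite"
  by (simp add: metric_def radial_matrix_def)

lemma vol_eq_1:
  fixes z :: "complex^'n::finite"
  assumes "z \<noteq> 0" "\<kappa> > 0"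
  shows "vol \<kappa> z = 1"
proof -
  define N where "N = CARD('n)"
  define F where "F = Fpot \<kappa> N (sq z)"
  have s: "sq z > 0" using sq_pos assms(1) by auto
  have N: "N > 0" by (simp add: N_def)
  have F: "F > 0" using Fpot_pos[OF s assms(2)] by (simp add: F_def)
  have "det (metric \<kappa> z) = of_real (F ^ (N - 1) * (F + deriv (Fpot \<kappa> N) (sq z) * sq z))"
    unfolding metric_eq_radial_matrix F_def N_def
    by (rule det_radial_matrix) (use F[unfolded F_def N_def] in simp)
  also have "F + deriv (Fpot \<kappa> N) (sq z) * sq z = Fpot_radial \<kappa> N (sq z)"
    by (simp add: F_def Fpot_radial_def)
  also have "F ^ (N - 1) * Fpot_radial \<kappa> N (sq z) = F ^ N * sq z ^ N / (sq z ^ N + \<kappa>)"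
    unfolding Fpot_radial_eq(2)[OF s assms(2) N] F_def[symmetric] using N
    by (metis (no_types, lifting) Suc_diff_1 power_Suc2 times_divide_eq_right mult.assoc)
  also have "\<dots> = 1"
    using Fpot_power[OF s assms(2) N] s assms(2) by (simp add: F_def add_pos_pos less_imp_neq[symmetric])
  finally show ?thesis unfolding vol_def by simp
qed

lemma matrix_inv_metric:
  fixes z :: "complex^'n::finite"
  assumes "z \<noteq> 0" "\<kappa> > 0"
  shows "matrix_inv (metric \<kappa> z)
    = radial_matrix z (1 / Fpot \<kappa> CARD('n) (sq z)) (\<kappa> / (Fpot \<kappa> CARD('n) (sq z) * sq z ^ Suc CARD('n)))"
proof -
  define N where "N = CARD('n)"
  define s where "s = sq z"
  define F where "F = Fpot \<kappa> N s"
  define F' where "F' = deriv (Fpot \<kappa> N) s"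
  have s: "s > 0" using sq_pos assms(1) by (auto simp: s_def)
  have N: "N > 0" by (simp add: N_def)
  have F: "F > 0" using Fpot_pos[OF s assms(2)] by (simp add: F_def)
  define P where "P = s^N + \<kappa>"
  have P: "P > 0" using s assms(2) by (simp add: P_def add_pos_pos)
  have S: "s^N > 0" using s by simp
  have G: "F + F' * s = F * s^N / P"
    using Fpot_radial_eq(2)[OF s assms(2) N] by (simp add: Fpot_radial_def F_def F'_def P_def)
  have "F' = - \<kappa> * F / (s * P)"
    unfolding F'_def deriv_Fpot[OF s assms(2) N] F_def P_def ..
  then have "- F' / (F * (F + F' * s)) = (\<kappa> * F / (s * P)) / (F * F * s^N / P)"
    unfolding G by simp
  also have "\<dots> = \<kappa> / (F * s ^ Suc N)"
    using F s P S by (simp add: field_simps)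
  finally have "- F' / (F * (F + F' * s)) = \<kappa> / (F * s ^ Suc N)" .
  moreover have "F + F' * s \<noteq> 0" unfolding G using F P s by simp
  ultimately show ?thesis
    unfolding metric_eq_radial_matrix using matrix_inv_radial_matrix[of F F' z] F
    by (simp add: N_def s_def F_def F'_def)
qed

lemma beta_eq_radial_form1:
  "(beta \<kappa> :: 'n::finite \<Rightarrow> complex^'n \<Rightarrow> complex) = radial_form1 0 1 (beta_coeff \<kappa> CARD('n)) D01"
  by (intro ext) (simp add: beta_def radial_form1_def beta_coeff_def divide_inverse mult.commute)

lemma omegat_eq:
  "omegat \<kappa> k \<mu> \<nu> z = 2 * \<i> * d1 (radial_form1 0 1 (beta_coeff \<kappa> CARD('n))) k \<mu> \<nu> z"
  for z :: "complex^'n::finite"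
proof -
  have "(\<lambda>j i (w :: complex^'n). case j of D10 \<Rightarrow> 0 | D01 \<Rightarrow> beta \<kappa> i w)
      = radial_form1 0 1 (beta_coeff \<kappa> CARD('n))"
    by (intro ext, simp add: beta_eq_radial_form1 radial_form1_def split: deg1.split)
  then show ?thesis unfolding omegat_def by simp
qed

lemma omega_eq:
  "omega \<kappa> k \<mu> \<nu> z = 2 * \<i> * d1 (radial_form1 0 1 (Fpot \<kappa> CARD('n))) k \<mu> \<nu> z"
  for z :: "complex^'n::finite"
proof -
  have "(\<lambda>j i (w :: complex^'n). case j of D10 \<Rightarrow> 0 | D01 \<Rightarrow> of_real (Fpot \<kappa> CARD('n) (sq w)) * w$i)
      = radial_form1 0 1 (Fpot \<kappa> CARD('n))"
    by (intro ext, simp add: radial_form1_def split: deg1.split)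
  then show ?thesis unfolding omega_def by simp
qed

lemma
  fixes z :: "complex^'n::finite"
  assumes "z \<noteq> 0" "\<kappa> > 0"
  shows Fpot_has_deriv_at_sq: "(Fpot \<kappa> CARD('n) has_real_derivative deriv (Fpot \<kappa> CARD('n)) (sq z)) (at (sq z))"
    and beta_coeff_has_deriv_at_sq:
      "(beta_coeff \<kappa> CARD('n) has_real_derivative deriv (beta_coeff \<kappa> CARD('n)) (sq z)) (at (sq z))"
proof -
  have s: "sq z > 0" using sq_pos assms(1) by auto
  have N: "CARD('n) > 0" by simp
  note dF = Fpot_has_real_derivative[OF s assms(2) N] and dh = beta_coeff_has_real_derivative[OF s assms(2) N]
  show "(Fpot \<kappa> CARD('n) has_real_derivative deriv (Fpot \<kappa> CARD('n)) (sq z)) (at (sq z))"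
    using dF unfolding DERIV_imp_deriv[OF dF] .
  show "(beta_coeff \<kappa> CARD('n) has_real_derivative deriv (beta_coeff \<kappa> CARD('n)) (sq z)) (at (sq z))"
    using dh unfolding DERIV_imp_deriv[OF dh] .
qed

lemma dbar_beta:
  fixes z :: "complex^'n::finite"
  assumes "z \<noteq> 0" "\<kappa> > 0"
  shows "dbar01 (beta \<kappa>) \<mu> \<nu> z = 0"
  using d1_radial_form1(3)[OF beta_coeff_has_deriv_at_sq[OF assms], of 0 1 \<mu> \<nu>]
  by (simp add: d1_def beta_eq_radial_form1)

lemma dz_beta:
  fixes z :: "complex^'n::finite"
  assumes "z \<noteq> 0" "\<kappa> > 0"
  shows "dz \<mu> (beta \<kappa> \<nu>) z
    = radial_matrix z (beta_coeff \<kappa> CARD('n) (sq z)) (deriv (beta_coeff \<kappa> CARD('n)) (sq z)) $ \<mu> $ \<nu>"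
  using wirtinger_radial_form1(1)[OF beta_coeff_has_deriv_at_sq[OF assms], of \<mu> 0 1 \<nu>]
  by (simp add: beta_eq_radial_form1)

lemma matrix_inv_metric_mult_dbeta:
  fixes z :: "complex^'n::finite"
  assumes "z \<noteq> 0" "\<kappa> > 0"
  shows "matrix_inv (metric \<kappa> z)
      ** radial_matrix z (beta_coeff \<kappa> CARD('n) (sq z)) (deriv (beta_coeff \<kappa> CARD('n)) (sq z))
    = radial_matrix z (1 / (sq z ^ CARD('n) + \<kappa>)) (- real CARD('n) / (sq z * (sq z ^ CARD('n) + \<kappa>)))"
proof -
  define N where "N = CARD('n)"
  define s where "s = sq z"
  define F where "F = Fpot \<kappa> N s"
  define S where "S = s^N"
  define P where "P = S + \<kappa>"
  have s: "s > 0" using sq_pos assms(1) by (auto simp: s_def)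
  have N: "N > 0" by (simp add: N_def)
  have F: "F > 0" using Fpot_pos[OF s assms(2)] by (simp add: F_def)
  have S: "S > 0" using s by (simp add: S_def)
  have P: "P > 0" using S assms(2) by (simp add: P_def)
  have h: "beta_coeff \<kappa> N s = F / P"
    using beta_coeff_eq[OF s assms(2) N] by (simp add: F_def P_def S_def)
  have h': "deriv (beta_coeff \<kappa> N) s = - F * (real N * S + \<kappa>) / (s * P^2)"
    using DERIV_imp_deriv[OF beta_coeff_has_real_derivative[OF s assms(2) N]] by (simp add: F_def P_def S_def)
  have "1 / F * (F / P) = 1 / P"
    using F by simp
  moreover have "1 / F * (- F * (real N * S + \<kappa>) / (s * P^2)) + \<kappa> / (F * s ^ Suc N) * (F / P)
      + \<kappa> / (F * s ^ Suc N) * (- F * (real N * S + \<kappa>) / (s * P^2)) * s = - real N / (s * P)"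
    using F s S P unfolding power_Suc S_def[symmetric]
    by (simp add: field_simps power2_eq_square) (simp add: P_def algebra_simps)
  ultimately show ?thesis
    unfolding matrix_inv_metric[OF assms] radial_matrix_mult N_def[symmetric] s_def[symmetric]
      F_def[symmetric] h h' S_def[symmetric] P_def[symmetric]
    using F by simp
qed

lemma invmetric_contract_dz_beta:
  fixes z :: "complex^'n::finite"
  assumes "z \<noteq> 0" "\<kappa> > 0"
  shows "(\<Sum>\<mu>\<in>UNIV. \<Sum>\<nu>\<in>UNIV. invmetric \<kappa> z \<mu> \<nu> * dz \<mu> (beta \<kappa> \<nu>) z) = 0"
proof -
  have s: "sq z > 0" using sq_pos assms(1) by auto
  have "(\<Sum>\<mu>\<in>UNIV. \<Sum>\<nu>\<in>UNIV. invmetric \<kappa> z \<mu> \<nu> * dz \<mu> (beta \<kappa> \<nu>) z)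
      = trace (matrix_inv (metric \<kappa> z)
          ** radial_matrix z (beta_coeff \<kappa> CARD('n) (sq z)) (deriv (beta_coeff \<kappa> CARD('n)) (sq z)))"
    unfolding trace_matrix_mult_eq_sum invmetric_def dz_beta[OF assms] ..
  also have "\<dots> = 0"
    unfolding matrix_inv_metric_mult_dbeta[OF assms] trace_radial_matrix
    using s assms(2) by (simp add: add_pos_pos less_imp_neq[symmetric])
  finally show ?thesis .
qed

lemma norm01_beta:
  fixes z :: "complex^'n::finite"
  assumes "z \<noteq> 0" "\<kappa> > 0"
  shows "norm01 \<kappa> (beta \<kappa>) z
    = Fpot \<kappa> CARD('n) (sq z) * sq z / ((sq z ^ CARD('n) + \<kappa>) * sq z ^ CARD('n))"
proof -
  define N where "N = CARD('n)"
  define s where "s = sq z"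
  define F where "F = Fpot \<kappa> N s"
  define h where "h = beta_coeff \<kappa> N s"
  define S where "S = s^N"
  define P where "P = S + \<kappa>"
  have s: "s > 0" using sq_pos assms(1) by (auto simp: s_def)
  have N: "N > 0" by (simp add: N_def)
  have F: "F > 0" using Fpot_pos[OF s assms(2)] by (simp add: F_def)
  have S: "S > 0" using s by (simp add: S_def)
  have P: "P > 0" using S assms(2) by (simp add: P_def)
  have "cnj (beta \<kappa> \<mu> z) * beta \<kappa> \<nu> z = radial_matrix z 0 (h^2) $ \<mu> $ \<nu>" for \<mu> \<nu>
    by (simp add: beta_eq_radial_form1 radial_form1_def radial_matrix_def h_def N_def s_def power2_eq_square)
  then have "norm01 \<kappa> (beta \<kappa>) z = Re (trace (matrix_inv (metric \<kappa> z) ** radial_matrix z 0 (h^2)))"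
    unfolding norm01_def trace_matrix_mult_eq_sum invmetric_def by (simp add: mult.assoc)
  also have "\<dots> = (1 / F * h^2 + \<kappa> / (F * s ^ Suc N) * h^2 * s) * s"
    unfolding matrix_inv_metric[OF assms] radial_matrix_mult trace_radial_matrix
    by (simp add: N_def s_def F_def)
  also have "\<dots> = F * s / (P * S)"
    unfolding h_def beta_coeff_eq[OF s assms(2) N] F_def[symmetric] S_def[symmetric] P_def[symmetric]
    using F s S P unfolding power_Suc S_def[symmetric]
    by (simp add: field_simps power2_eq_square) (simp add: P_def algebra_simps)
  finally show ?thesis by (simp add: N_def s_def F_def S_def P_def)
qed

lemma omegat_components:
  fixes z :: "complex^'n::finite"
  assumes "z \<noteq> 0" "\<kappa> > 0"
  shows "omegat \<kappa> B20 \<mu> \<nu> z = 0" and "omegat \<kappa> B02 \<mu> \<nu> z = 0"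
    and "omegat \<kappa> B11 \<mu> \<nu> z = 2 * \<i>
      * radial_matrix z (beta_coeff \<kappa> CARD('n) (sq z)) (deriv (beta_coeff \<kappa> CARD('n)) (sq z)) $ \<mu> $ \<nu>"
  unfolding omegat_eq d1_radial_form1[OF beta_coeff_has_deriv_at_sq[OF assms]] by simp_all

lemma norm2f_omegat:
  fixes z :: "complex^'n::finite"
  assumes "z \<noteq> 0" "\<kappa> > 0"
  shows "norm2f \<kappa> (omegat \<kappa>) z = 4 * (real CARD('n) * (real CARD('n) - 1) / (sq z ^ CARD('n) + \<kappa>)^2)"
proof -
  define N where "N = CARD('n)"
  define s where "s = sq z"
  define P where "P = s^N + \<kappa>"
  define Ginv where "Ginv = matrix_inv (metric \<kappa> z)"
  define H where "H = radial_matrix z (beta_coeff \<kappa> N s) (deriv (beta_coeff \<kappa> N) s)"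
  have s: "s > 0" using sq_pos assms(1) by (auto simp: s_def)
  have P: "P > 0" using s assms(2) by (simp add: P_def add_pos_pos)
  have "norm2f \<kappa> (omegat \<kappa>) z
      = Re (\<Sum>\<mu>\<in>UNIV. \<Sum>\<nu>\<in>UNIV. \<Sum>\<alpha>\<in>UNIV. \<Sum>\<rho>\<in>UNIV.
          4 * (Ginv$\<alpha>$\<mu> * Ginv$\<nu>$\<rho> * H$\<mu>$\<nu> * H$\<rho>$\<alpha>))"
    unfolding norm2f_def omegat_components[OF assms] invmetric_def Ginv_def[symmetric]
    by (simp add: H_def N_def s_def cnj_radial_matrix algebra_simps)
  also have "\<dots> = 4 * Re (trace ((Ginv ** H) ** (Ginv ** H)))"
    by (simp add: trace_matrix_mult4_eq_sum sum_distrib_left mult.assoc)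
  also have "Ginv ** H = radial_matrix z (1 / P) (- real N / (s * P))"
    unfolding Ginv_def H_def N_def s_def P_def by (rule matrix_inv_metric_mult_dbeta[OF assms])
  also have "Re (trace (radial_matrix z (1 / P) (- real N / (s * P)) ** radial_matrix z (1 / P) (- real N / (s * P))))
      = real N * (real N - 1) / P^2"
    unfolding radial_matrix_mult trace_radial_matrix s_def[symmetric]
    using s P by (simp add: N_def field_simps power2_eq_square)
  finally show ?thesis by (simp add: N_def s_def P_def)
qed

lemma flat_xi: "flat \<kappa> (xi :: 'n::finite vfield) = radial_form1 (- \<i> / 2) (\<i> / 2) (Fpot_radial \<kappa> CARD('n))"
proof (intro ext)
  fix k i and w :: "complex^'n"
  show "flat \<kappa> xi k i w = radial_form1 (- \<i> / 2) (\<i> / 2) (Fpot_radial \<kappa> CARD('n)) k i w"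
  proof (cases k)
    case D10
    have "flat \<kappa> xi D10 i w = - (\<i> / 2) * (\<Sum>\<nu>\<in>UNIV. metric \<kappa> w $ i $ \<nu> * cnj (w$\<nu>))"
      by (simp add: flat_def xi_def sum_distrib_left algebra_simps)
    also have "\<dots> = radial_form1 (- \<i> / 2) (\<i> / 2) (Fpot_radial \<kappa> CARD('n)) D10 i w"
      unfolding metric_eq_radial_matrix radial_matrix_mult_cnj
      by (simp add: radial_form1_def Fpot_radial_def)
    finally show ?thesis using D10 by simp
  next
    case D01
    have "flat \<kappa> xi D01 i w = \<i> / 2 * (\<Sum>\<mu>\<in>UNIV. metric \<kappa> w $ \<mu> $ i * w$\<mu>)"
      by (simp add: flat_def xi_def sum_distrib_left algebra_simps)
    also have "\<dots> = radial_form1 (- \<i> / 2) (\<i> / 2) (Fpot_radial \<kappa> CARD('n)) D01 i w"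
      unfolding metric_eq_radial_matrix radial_matrix_transpose_mult
      by (simp add: radial_form1_def Fpot_radial_def)
    finally show ?thesis using D01 by simp
  qed
qed

lemma omega_sub_omegat:
  fixes z :: "complex^'n::finite"
  assumes "z \<noteq> 0" "\<kappa> > 0"
  shows "omega \<kappa> k \<mu> \<nu> z - of_real \<kappa> * omegat \<kappa> k \<mu> \<nu> z = 2 * d1 (flat \<kappa> xi) k \<mu> \<nu> z"
proof -
  have s: "sq z > 0" using sq_pos assms(1) by auto
  note dF = Fpot_has_deriv_at_sq[OF assms] and dh = beta_coeff_has_deriv_at_sq[OF assms]
  note dG = Fpot_radial_has_real_derivative[OF s assms(2) _ dF dh]
  have G: "Fpot_radial \<kappa> CARD('n) (sq z) = Fpot \<kappa> CARD('n) (sq z) - \<kappa> * beta_coeff \<kappa> CARD('n) (sq z)"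
    using Fpot_radial_eq(1)[OF s assms(2)] by simp
  show ?thesis
    unfolding omega_eq omegat_eq flat_xi
    by (cases k) (simp_all add: d1_radial_form1[OF dF] d1_radial_form1[OF dh] d1_radial_form1[OF dG] G
        radial_matrix_def algebra_simps)
qed

section \<open>Integrability\<close>

lemma nn_integral_lborel_scale:
  fixes f :: "'a::euclidean_space \<Rightarrow> ennreal"
  assumes [measurable]: "f \<in> borel_measurable borel" and "c \<noteq> 0"
  shows "(\<integral>\<^sup>+ x. f x \<partial>(lborel::'a measure)) = ennreal (\<bar>c\<bar> ^ DIM('a)) * (\<integral>\<^sup>+ x. f (c *\<^sub>R x) \<partial>(lborel::'a measure))"
  by (subst lborel_affine[OF assms(2), of 0]) (simp add: nn_integral_density nn_integral_distr nn_integral_cmult)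

lemma borel_measurable_indicator_inverse_norm_power:
  assumes "S \<in> sets borel"
  shows "(\<lambda>x::'a::euclidean_space. indicator S x * ennreal (1 / norm x ^ d)) \<in> borel_measurable borel"
proof -
  have "(\<lambda>x::'a. 1 / norm x ^ d) \<in> borel_measurable borel"
    by (intro borel_measurable_divide borel_measurable_power borel_measurable_norm) auto
  then show ?thesis using assms by measurable
qed

lemma nn_integral_inverse_norm_power_DIM_scale:
  fixes c r :: real
  assumes "c > 0"
  shows "(\<integral>\<^sup>+ x. indicator (ball 0 (c * r) - {0}) x * ennreal (1 / norm x ^ DIM('a)) \<partial>(lborel::'a::euclidean_space measure))
    = (\<integral>\<^sup>+ x. indicator (ball 0 r - {0}) x * ennreal (1 / norm x ^ DIM('a)) \<partial>(lborel::'a measure))"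
proof -
  have "(\<integral>\<^sup>+ x. indicator (ball 0 (c * r) - {0}) x * ennreal (1 / norm x ^ DIM('a)) \<partial>(lborel::'a measure))
      = ennreal (\<bar>c\<bar> ^ DIM('a)) * (\<integral>\<^sup>+ x. indicator (ball 0 (c * r) - {0}) (c *\<^sub>R x)
          * ennreal (1 / norm (c *\<^sub>R x) ^ DIM('a)) \<partial>(lborel::'a measure))"
    by (rule nn_integral_lborel_scale[where f="\<lambda>x::'a. indicator (ball 0 (c * r) - {0}) x * ennreal (1 / norm x ^ DIM('a))"])
       (use assms in \<open>auto intro: borel_measurable_indicator_inverse_norm_power\<close>)
  also have "(\<lambda>x::'a. indicator (ball 0 (c * r) - {0}) (c *\<^sub>R x) * ennreal (1 / norm (c *\<^sub>R x) ^ DIM('a)))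
      = (\<lambda>x. ennreal (1 / c ^ DIM('a)) * (indicator (ball 0 r - {0}) x * ennreal (1 / norm x ^ DIM('a))))"
    using assms by (auto simp: indicator_def ennreal_mult'[symmetric] power_mult_distrib field_simps)
  also have "(\<integral>\<^sup>+ x. ennreal (1 / c ^ DIM('a)) * (indicator (ball 0 r - {0}) x * ennreal (1 / norm x ^ DIM('a)))
      \<partial>(lborel::'a measure))
      = ennreal (1 / c ^ DIM('a)) * (\<integral>\<^sup>+ x. indicator (ball 0 r - {0}) x * ennreal (1 / norm x ^ DIM('a))
      \<partial>(lborel::'a measure))"
    by (rule nn_integral_cmult) (auto intro: borel_measurable_indicator_inverse_norm_power)
  also have "ennreal (\<bar>c\<bar> ^ DIM('a)) * (ennreal (1 / c ^ DIM('a)) * (\<integral>\<^sup>+ x. indicator (ball 0 r - {0}) x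
      * ennreal (1 / norm x ^ DIM('a)) \<partial>(lborel::'a measure)))
      = (\<integral>\<^sup>+ x. indicator (ball 0 r - {0}) x * ennreal (1 / norm x ^ DIM('a)) \<partial>(lborel::'a measure))"
    using assms by (simp add: mult.assoc[symmetric] ennreal_mult'[symmetric])
  finally show ?thesis .
qed

lemma nn_integral_inverse_norm_power_DIM_annulus_pos:
  "(\<integral>\<^sup>+ x. indicator (ball 0 1 - ball 0 (1/2)) x * ennreal (1 / norm x ^ DIM('a))
      \<partial>(lborel::'a::euclidean_space measure)) > 0"
proof -
  define d where "d = DIM('a)"
  have le: "(\<integral>\<^sup>+ x. indicator (ball 0 1 - ball 0 (1/2)) x \<partial>(lborel::'a measure))
      \<le> (\<integral>\<^sup>+ x. indicator (ball 0 1 - ball 0 (1/2)) x * ennreal (1 / norm x ^ d) \<partial>(lborel::'a measure))"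
  proof (rule nn_integral_mono)
    fix x :: 'a
    show "indicator (ball 0 1 - ball 0 (1/2)) x \<le> indicator (ball 0 1 - ball 0 (1/2)) x * ennreal (1 / norm x ^ d)"
    proof (cases "x \<in> ball 0 1 - ball 0 (1/2)")
      case True
      then have "norm x ^ d \<le> 1" "norm x > 0" by (auto simp: power_le_one)
      then show ?thesis using True by (simp add: indicator_def)
    qed (auto simp: indicator_def)
  qed
  have eq: "(\<integral>\<^sup>+ x. indicator (ball 0 1 - ball 0 (1/2)) x \<partial>(lborel::'a measure))
      = ennreal (unit_ball_vol (real d) - unit_ball_vol (real d) * (1/2)^d)"
  proof -
    have "(\<integral>\<^sup>+ x. indicator (ball 0 1 - ball 0 (1/2)) x \<partial>(lborel::'a measure))
        = emeasure lborel (ball (0::'a) 1 - ball 0 (1/2))"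
      by (simp add: nn_integral_indicator)
    also have "\<dots> = emeasure lborel (ball (0::'a) 1) - emeasure lborel (ball (0::'a) (1/2))"
      using emeasure_lborel_ball_finite[of "0::'a" "1/2"] by (intro emeasure_Diff) auto
    also have "\<dots> = ennreal (unit_ball_vol (real d) - unit_ball_vol (real d) * (1/2)^d)"
      by (simp add: emeasure_ball d_def ennreal_minus)
    finally show ?thesis .
  qed
  have "unit_ball_vol (real d) * (1/2)^d < unit_ball_vol (real d)"
    by (simp add: d_def power_less_one_iff mult_less_cancel_left1)
  then have "0 < ennreal (unit_ball_vol (real d) - unit_ball_vol (real d) * (1/2)^d)"
    by simp
  also note eq[symmetric]
  also note le
  finally show ?thesis by (simp add: d_def)
qed

text \<open>With \<open>J r\<close> the integral of \<open>|x|\<^sup>-\<^sup>d\<close> over the punctured \<open>r\<close>-ball in \<open>\<real>\<^sup>d\<close>: scaling gives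
  \<open>J 1 = J (1/2)\<close>, while \<open>J 1 - J (1/2)\<close> is the positive integral over an annulus.\<close>
lemma nn_integral_inverse_norm_power_DIM_ball:
  "(\<integral>\<^sup>+ x. indicator (ball 0 1 - {0}) x * ennreal (1 / norm x ^ DIM('a)) \<partial>(lborel::'a::euclidean_space measure)) = \<infinity>"
proof -
  let ?J = "\<lambda>r. (\<integral>\<^sup>+ x. indicator (ball 0 r - {0}) x * ennreal (1 / norm x ^ DIM('a)) \<partial>(lborel::'a measure))"
  let ?A = "(\<integral>\<^sup>+ x. indicator (ball 0 1 - ball 0 (1/2)) x * ennreal (1 / norm x ^ DIM('a)) \<partial>(lborel::'a measure))"
  have annulus_split: "?J 1 = ?J (1/2) + ?A"
  proof -
    have "indicator (ball 0 1 - {0}) x * ennreal (1 / norm x ^ DIM('a))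
        = indicator (ball 0 (1/2) - {0}) x * ennreal (1 / norm x ^ DIM('a))
          + indicator (ball 0 1 - ball 0 (1/2)) x * ennreal (1 / norm x ^ DIM('a))" for x :: 'a
      by (auto simp: indicator_def)
    then show ?thesis
      by (simp add: nn_integral_add borel_measurable_indicator_inverse_norm_power)
  qed
  have scale: "?J 1 = ?J (1/2)"
    using nn_integral_inverse_norm_power_DIM_scale[of 2 "1/2"] by simp
  have pos: "?A > 0" by (rule nn_integral_inverse_norm_power_DIM_annulus_pos)
  show ?thesis
  proof (rule ccontr)
    assume "?J 1 \<noteq> \<infinity>"
    moreover have "?J 1 + ?A = ?J 1 + 0" using annulus_split scale by simp
    ultimately have "?A = 0" using ennreal_add_left_cancel by blast
    then show False using pos by simp
  qed
qed

lemma integrable_inverse_1_plus_square_lborel: "integrable lborel (\<lambda>x::real. inverse (1 + x^2))"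
  using integrable_inverse_1_plus_square by (simp add: set_integrable_def einterval_def)

lemma integrable_prod_inverse_1_plus_square:
  "integrable lborel (\<lambda>x::'a::euclidean_space. \<Prod>b\<in>Basis. inverse (1 + (x \<bullet> b)^2))"
proof (subst integrable_iff_bounded, intro conjI)
  show "(\<lambda>x::'a. \<Prod>b\<in>Basis. inverse (1 + (x \<bullet> b)^2)) \<in> borel_measurable lborel"
    by measurable
  have "(\<integral>\<^sup>+ x. ennreal (norm (\<Prod>b\<in>Basis. inverse (1 + (x \<bullet> b)^2))) \<partial>(lborel::'a measure))
     = (\<integral>\<^sup>+ x. (\<Prod>b\<in>Basis. ennreal (inverse (1 + (x \<bullet> b)^2))) \<partial>(lborel::'a measure))"
    by (intro nn_integral_cong) (simp add: prod_nonneg add_pos_nonneg prod_ennreal abs_prod)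
  also have "\<dots> = (\<Prod>b\<in>(Basis::'a set). (\<integral>\<^sup>+ x. ennreal (inverse (1 + x^2)) \<partial>lborel))"
    by (rule nn_integral_lborel_prod) auto
  also have "\<dots> < \<infinity>"
    using integrable_inverse_1_plus_square_lborel unfolding integrable_iff_bounded
    by (simp add: add_pos_nonneg power_less_top_ennreal)
  finally show "(\<integral>\<^sup>+ x. ennreal (norm (\<Prod>b\<in>Basis. inverse (1 + (x \<bullet> b)^2))) \<partial>(lborel::'a measure)) < \<infinity>" .
qed

lemma prod_Basis_1_plus_square_le:
  fixes x :: "'a::euclidean_space"
  shows "(\<Prod>b\<in>Basis. 1 + (x \<bullet> b)^2) \<le> (1 + norm x ^ 2) ^ DIM('a)"
proof -
  have "(\<Prod>b\<in>Basis. 1 + (x \<bullet> b)^2) \<le> (\<Prod>b\<in>(Basis::'a set). 1 + norm x ^ 2)"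
  proof (rule prod_mono)
    fix b :: 'a assume "b \<in> Basis"
    then have "(x \<bullet> b)^2 \<le> norm x ^ 2"
      by (metis Basis_le_norm abs_ge_zero power2_abs power_mono)
    then show "0 \<le> 1 + (x \<bullet> b)^2 \<and> 1 + (x \<bullet> b)^2 \<le> 1 + norm x ^ 2" by simp
  qed
  then show ?thesis by simp
qed

lemma integrable_lborel_decay:
  fixes f :: "'a::euclidean_space \<Rightarrow> real"
  assumes [measurable]: "f \<in> borel_measurable lborel"
    and bound: "\<And>x. \<bar>f x\<bar> \<le> C / (1 + norm x ^ 2) ^ DIM('a)"
  shows "integrable lborel f"
proof (rule Bochner_Integration.integrable_bound)
  show "integrable lborel (\<lambda>x::'a. C * (\<Prod>b\<in>Basis. inverse (1 + (x \<bullet> b)^2)))"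
    by (intro integrable_mult_right integrable_prod_inverse_1_plus_square)
  have C: "C \<ge> 0"
    using bound[of 0] by simp
  show "AE x in lborel. norm (f x) \<le> norm (C * (\<Prod>b\<in>Basis. inverse (1 + (x \<bullet> b)^2)))"
  proof (intro AE_I2)
    fix x :: 'a
    have "(\<Prod>b\<in>(Basis::'a set). 1 + (x \<bullet> b)^2) > 0" by (intro prod_pos) (simp add: add_pos_nonneg)
    then have "C / (1 + norm x ^ 2) ^ DIM('a) \<le> C / (\<Prod>b\<in>Basis. 1 + (x \<bullet> b)^2)"
      using prod_Basis_1_plus_square_le[of x] C by (intro divide_left_mono) auto
    also have "\<dots> = norm (C * (\<Prod>b\<in>Basis. inverse (1 + (x \<bullet> b)^2)))"
      using C by (simp add: prod_inversef[symmetric] divide_inverse abs_mult prod_nonneg add_pos_nonneg abs_prod)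
    finally show "norm (f x) \<le> norm (C * (\<Prod>b\<in>Basis. inverse (1 + (x \<bullet> b)^2)))"
      using bound[of x] by simp
  qed
qed simp

lemma one_plus_power_le:
  fixes s \<kappa> :: real
  assumes "s \<ge> 0" "\<kappa> > 0"
  shows "(1 + s)^N \<le> 2^N * (1 + 1/\<kappa>) * (s^N + \<kappa>)"
proof -
  have "(1 + s)^N \<le> 2^N * (1 + s^N)"
  proof (cases "s \<le> 1")
    case True
    have "(1 + s)^N \<le> 2^N" using True assms by (intro power_mono) auto
    also have "\<dots> \<le> 2^N * (1 + s^N)" using assms by simp
    finally show ?thesis .
  next
    case False
    have "(1 + s)^N \<le> (2 * s)^N" using False assms by (intro power_mono) auto
    also have "\<dots> \<le> 2^N * (1 + s^N)" by (simp add: power_mult_distrib)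
    finally show ?thesis .
  qed
  also have "1 + s^N \<le> (1 + 1/\<kappa>) * (s^N + \<kappa>)"
    using assms by (simp add: field_simps)
  then have "2^N * (1 + s^N) \<le> 2^N * ((1 + 1/\<kappa>) * (s^N + \<kappa>))"
    by (intro mult_left_mono) auto
  finally show ?thesis by (simp add: mult.assoc)
qed

lemma sq_integrable_omegat:
  fixes \<kappa> :: real
  assumes "\<kappa> > 0"
  shows "sq_integrable \<kappa> (\<lambda>z::complex^'n::finite. norm2f \<kappa> (omegat \<kappa>) z)"
proof -
  define N where "N = CARD('n)"
  define a where "a = 4 * (real N * (real N - 1))"
  define K where "K = 2^N * (1 + 1/\<kappa>)"
  define \<Phi> where "\<Phi> z = a / (sq z ^ N + \<kappa>)^2" for z :: "complex^'n"
  have a: "a \<ge> 0" by (simp add: a_def N_def)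
  have "(\<lambda>x. indicator (-{0}) x *\<^sub>R (norm2f \<kappa> (omegat \<kappa>) x * vol \<kappa> x))
      = (\<lambda>x::complex^'n. indicator (-{0}) x *\<^sub>R \<Phi> x)"
    by (auto simp: fun_eq_iff indicator_def norm2f_omegat[OF _ assms] vol_eq_1[OF _ assms] \<Phi>_def a_def N_def)
  moreover have "integrable lborel (\<lambda>x::complex^'n. indicator (-{0}) x *\<^sub>R \<Phi> x)"
  proof (rule integrable_lborel_decay)
    have "(-{0}::(complex^'n) set) \<in> sets lborel" by auto
    then show "(\<lambda>x::complex^'n. indicator (-{0}) x *\<^sub>R \<Phi> x) \<in> borel_measurable lborel"
      unfolding \<Phi>_def sq_norm by measurable
    fix x :: "complex^'n"
    have P: "sq x ^ N + \<kappa> > 0" using sq_nonneg[of x] assms by (simp add: add_nonneg_pos)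
    have "((1 + sq x)^N)^2 \<le> (K * (sq x ^ N + \<kappa>))^2"
      using one_plus_power_le[OF sq_nonneg assms] sq_nonneg[of x] by (intro power_mono) (auto simp: K_def)
    then have "a * ((1 + sq x)^N)^2 \<le> a * K^2 * (sq x ^ N + \<kappa>)^2"
      using a by (simp add: mult_left_mono power_mult_distrib mult.assoc)
    then have "\<Phi> x \<le> a * K^2 / ((1 + sq x)^N)^2"
      using P sq_nonneg[of x] by (simp add: \<Phi>_def divide_simps add_nonneg_pos)
    moreover have "\<bar>indicator (-{0}) x *\<^sub>R \<Phi> x\<bar> \<le> \<Phi> x"
      using a P by (simp add: \<Phi>_def indicator_def)
    moreover have "((1 + sq x)^N)^2 = (1 + norm x ^ 2) ^ DIM(complex^'n)"
      by (simp add: sq_norm N_def power_mult[symmetric] mult.commute)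
    ultimately show "\<bar>indicator (-{0}) x *\<^sub>R \<Phi> x\<bar> \<le> a * K^2 / (1 + norm x ^ 2) ^ DIM(complex^'n)"
      by simp
  qed
  ultimately show ?thesis unfolding sq_integrable_def set_integrable_def by simp
qed

lemma norm01_beta_lower_bound:
  fixes z :: "complex^'n::finite"
  assumes "z \<noteq> 0" "\<kappa> > 0" "sq z \<le> 1"
  shows "root CARD('n) \<kappa> / (1 + \<kappa>) / sq z ^ CARD('n) \<le> norm01 \<kappa> (beta \<kappa>) z"
proof -
  define N where "N = CARD('n)"
  define s where "s = sq z"
  define F where "F = Fpot \<kappa> N s"
  define r where "r = root N \<kappa>"
  have N: "N > 0" by (simp add: N_def)
  have s: "s > 0" using sq_pos assms(1) by (auto simp: s_def)
  have F: "F > 0" using Fpot_pos[OF s assms(2)] by (simp add: F_def)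
  have S: "s^N > 0" "s^N \<le> 1" using s assms(3) by (simp_all add: s_def power_le_one)
  have r: "r > 0" using N assms(2) by (simp add: r_def)
  have "(F * s)^N = s^N + \<kappa>"
    using Fpot_power[OF s assms(2) N] S s by (simp add: F_def power_mult_distrib)
  then have "r^N \<le> (F * s)^N"
    using N assms(2) S by (simp add: r_def)
  then have Fs: "r \<le> F * s"
    using N F s r by (simp add: power_mono_iff)
  have "r / (1 + \<kappa>) / s^N = r / ((1 + \<kappa>) * s^N)" by simp
  also have "\<dots> \<le> r / ((s^N + \<kappa>) * s^N)"
    using S r assms(2) by (intro divide_left_mono mult_right_mono mult_pos_pos) auto
  also have "\<dots> \<le> F * s / ((s^N + \<kappa>) * s^N)"
    using Fs S assms(2) by (intro divide_right_mono) auto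
  finally show ?thesis
    unfolding norm01_beta[OF assms(1,2)] by (simp add: N_def s_def F_def r_def)
qed

lemma not_sq_integrable_beta:
  fixes \<kappa> :: real
  assumes "\<kappa> > 0"
  shows "\<not> sq_integrable \<kappa> (\<lambda>z::complex^'n::finite. norm01 \<kappa> (beta \<kappa>) z)"
proof
  define f where "f x = indicator (-{0}) x *\<^sub>R (norm01 \<kappa> (beta \<kappa>) x * vol \<kappa> x)" for x :: "complex^'n"
  define c where "c = root CARD('n) \<kappa> / (1 + \<kappa>)"
  define g where "g x = indicator (ball 0 1 - {0}) x * ennreal (1 / norm x ^ DIM(complex^'n))" for x :: "complex^'n"
  have c: "c > 0" using assms by (simp add: c_def)
  assume "sq_integrable \<kappa> (\<lambda>z::complex^'n. norm01 \<kappa> (beta \<kappa>) z)"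
  then have "(\<integral>\<^sup>+ x. ennreal (norm (f x)) \<partial>lborel) < \<infinity>"
    unfolding sq_integrable_def set_integrable_def f_def integrable_iff_bounded by blast
  moreover have "ennreal c * g x \<le> ennreal (norm (f x))" for x
  proof (cases "x \<in> ball 0 1 - {0}")
    case True
    then have x: "x \<noteq> 0" "sq x \<le> 1" by (auto simp: sq_norm power_le_one)
    have "norm x ^ DIM(complex^'n) = sq x ^ CARD('n)"
      by (simp add: sq_norm power_mult[symmetric] mult.commute)
    then have "ennreal c * g x = ennreal (c / sq x ^ CARD('n))"
      using True c by (simp add: g_def ennreal_mult'[symmetric] divide_inverse)
    also have "c / sq x ^ CARD('n) \<le> norm (f x)"
      using norm01_beta_lower_bound[OF x(1) assms x(2)] x(1) by (simp add: f_def c_def vol_eq_1[OF x(1) assms])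
    finally show ?thesis by (simp add: ennreal_leI)
  qed (simp add: g_def)
  then have "(\<integral>\<^sup>+ x. ennreal c * g x \<partial>lborel) \<le> (\<integral>\<^sup>+ x. ennreal (norm (f x)) \<partial>lborel)"
    by (rule nn_integral_mono)
  moreover have "(\<integral>\<^sup>+ x. ennreal c * g x \<partial>lborel) = \<infinity>"
  proof -
    have "(\<integral>\<^sup>+ x. ennreal c * g x \<partial>lborel) = ennreal c * (\<integral>\<^sup>+ x. g x \<partial>lborel)"
      unfolding g_def by (rule nn_integral_cmult) (auto intro: borel_measurable_indicator_inverse_norm_power)
    then show ?thesis
      unfolding g_def nn_integral_inverse_norm_power_DIM_ball using c by (simp add: ennreal_mult_top)
  qed
  ultimately show False by simp
qed

theorem mainTheorem3:
  fixes \<kappa> :: real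
  assumes "CARD('n::finite) \<ge> 2" and "\<kappa> > 0"
  shows "(\<forall>z::complex^'n. z \<noteq> 0 \<longrightarrow> (\<forall>\<mu> \<nu>. dbar01 (beta \<kappa>) \<mu> \<nu> z = 0))
    \<and> (\<forall>z::complex^'n. z \<noteq> 0 \<longrightarrow>
          (\<Sum>\<mu>\<in>UNIV. \<Sum>\<nu>\<in>UNIV. invmetric \<kappa> z \<mu> \<nu> * dz \<mu> (beta \<kappa> \<nu>) z) = 0)
    \<and> sq_integrable \<kappa> (\<lambda>z::complex^'n. norm2f \<kappa> (omegat \<kappa>) z)
    \<and> \<not> sq_integrable \<kappa> (\<lambda>z::complex^'n. norm01 \<kappa> (beta \<kappa>) z)
    \<and> (\<forall>z::complex^'n. z \<noteq> 0 \<longrightarrow> (\<forall>k \<mu> \<nu>.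
          omega \<kappa> k \<mu> \<nu> z - of_real \<kappa> * omegat \<kappa> k \<mu> \<nu> z = 2 * d1 (flat \<kappa> xi) k \<mu> \<nu> z))"
  using dbar_beta[OF _ assms(2)] invmetric_contract_dz_beta[OF _ assms(2)] sq_integrable_omegat[OF assms(2)]
    not_sq_integrable_beta[OF assms(2)] omega_sub_omegat[OF _ assms(2)]
  by blast

end
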